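(* Let $F\in\mathrm{GL}^+(n)$ and $H\in\mathbb{R}^{n\times n}$ such that $\operatorname{rank}(H)=1$ and $F+H\in\mathrm{GL}^+(n)$. Then there exist finitely many $t_1,\dots,t_m\in(0,1)$ such that the mapping $t\mapsto\hat\lambda(F+tH)$, sending $t$ to the vector of ordered singular values $\hat\lambda_1(F+tH)\geq\dots\geq\hat\lambda_n(F+tH)$, is twice continuously differentiable on $(0,1)\setminus\{t_1,\dots,t_m\}$.
   Context: $\mathrm{GL}^+(n)$ is the group of real invertible $n\times n$ matrices with positive determinant. *)

theory Defs
  imports "HOL-Analysis.Analysis" "HOL-Computational_Algebra.Polynomial"
begin

definition charpoly :: "real^'n^'n \<Rightarrow> real poly" where
  "charpoly A = det (\<chi> i j. (if i = j then [:0, 1:] else 0) - [:A $ i $ j:])"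

text \<open>Ordered singular values: the square roots of the eigenvalues of A^T A
  (with algebraic multiplicity), listed in decreasing order.
  Entry k (k < CARD('n)) is the (k+1)-th largest singular value.\<close>
definition sing_vals :: "real^'n^'n \<Rightarrow> real list" where
  "sing_vals A = rev (sorted_list_of_multiset
      (image_mset sqrt (proots (charpoly (transpose A ** A)))))"

definition C2_on :: "real set \<Rightarrow> (real \<Rightarrow> real) \<Rightarrow> bool" where
  "C2_on U f \<longleftrightarrow> (\<exists>f1 f2. (\<forall>t\<in>U. (f has_real_derivative f1 t) (at t)
       \<and> (f1 has_real_derivative f2 t) (at t)) \<and> continuous_on U f2)"

end

theory Submission
  imports Defs "Subresultants.Subresultant_Gcd" "HOL-Computational_Algebra.Field_as_Ring"
    "HOL-Computational_Algebra.Fundamental_Theorem_Algebra"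
begin

text \<open>The squares of the singular values of \<open>F + t H\<close> are the roots of
  \<open>P(t, x) = det (x I - (F + t H)\<^sup>T (F + t H))\<close>, a monic polynomial in \<open>x\<close> over \<open>\<real>[t]\<close>.
  Factor \<open>P\<close> into primes in \<open>\<real>[t][x]\<close>.  The resultant of a prime factor with its \<open>x\<close>-derivative,
  and the resultant of two distinct prime factors, are nonzero polynomials in \<open>t\<close>; away from
  their finitely many zeros (and those of \<open>det (F + t H)\<close>) every root of \<open>P(t, \<cdot>)\<close> is a simple
  root of exactly one prime factor.  By implicit differentiation it then moves along a \<open>C\<^sup>2\<close>
  branch, distinct branches do not meet, so the order of the roots is locally frozen and each
  ordered singular value is locally the square root of one positive \<open>C\<^sup>2\<close> branch.\<close>

hide_const (open) Determinant.det Matrix.mat Matrix.row Matrix.col Matrix.vec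
no_notation Matrix.vec_index (infixl "$" 100)
no_notation transpose_mat ("(_\<^sup>T)" [1000])

text \<open>Makes \<open>prod_mset_prime_factorization\<close> available for polynomials over \<open>\<real>[t]\<close>.\<close>

instance poly :: ("{factorial_ring_gcd,semiring_gcd_mult_normalize,normalization_semidom_multiplicative}")
  factorial_semiring_multiplicative ..

section \<open>Bivariate polynomials\<close>

text \<open>A bivariate polynomial \<open>q(t, x)\<close> is a polynomial in \<open>x\<close> with coefficients in \<open>\<real>[t]\<close>.\<close>

definition eval_param :: "real poly poly \<Rightarrow> real \<Rightarrow> real poly" where
  "eval_param q t = map_poly (\<lambda>c. poly c t) q"

definition poly2 :: "real poly poly \<Rightarrow> real \<Rightarrow> real \<Rightarrow> real" where
  "poly2 q t x = poly (eval_param q t) x"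

definition pderiv_param :: "real poly poly \<Rightarrow> real poly poly" where
  "pderiv_param q = map_poly pderiv q"

lemma eval_param_hom: "comm_ring_hom (\<lambda>q. eval_param q t)"
proof -
  interpret map_poly_comm_ring_hom "\<lambda>c. poly c t" ..
  show ?thesis unfolding eval_param_def by (rule comm_ring_hom_axioms)
qed

lemma coeff_eval_param: "coeff (eval_param q t) k = poly (coeff q k) t"
  by (simp add: eval_param_def coeff_map_poly)

lemma eval_param_pderiv: "eval_param (pderiv q) t = pderiv (eval_param q t)"
  by (simp add: eval_param_def poly_hom.map_poly_pderiv)

lemma poly2_0 [simp]: "poly2 0 t x = 0"
  by (simp add: poly2_def eval_param_def)

lemma poly2_pCons: "poly2 (pCons a p) t x = poly a t + x * poly2 p t x"
  by (simp add: poly2_def eval_param_def poly_hom.map_poly_pCons_hom)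

lemma poly2_add: "poly2 (p + q) t x = poly2 p t x + poly2 q t x"
  by (simp add: poly2_def eval_param_def poly_hom.map_poly_hom_add)

lemma pderiv_param_pCons: "pderiv_param (pCons a p) = pCons (pderiv a) (pderiv_param p)"
  by (simp add: pderiv_param_def Polynomial.map_poly_pCons)

lemma degree_eval_param:
  assumes "poly (lead_coeff q) t \<noteq> 0"
  shows "degree (eval_param q t) = degree q"
proof (rule antisym)
  show "degree (eval_param q t) \<le> degree q"
    unfolding eval_param_def by (rule degree_map_poly_le)
  show "degree q \<le> degree (eval_param q t)"
    using assms by (intro le_degree) (simp add: coeff_eval_param)
qed

lemma eval_param_nonzero:
  assumes "poly (lead_coeff q) t \<noteq> 0"
  shows "eval_param q t \<noteq> 0"
  using assms coeff_eval_param[of q t "degree q"] by auto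

lemma degree_eval_param_pderiv:
  assumes "poly (lead_coeff q) t \<noteq> 0"
  shows "degree (eval_param (pderiv q) t) = degree (pderiv q)"
  using degree_eval_param[OF assms] by (simp add: eval_param_pderiv degree_pderiv)

lemma resultant_eval_param:
  assumes "degree (eval_param p t) = degree p" "degree (eval_param q t) = degree q"
  shows "resultant (eval_param p t) (eval_param q t) = poly (resultant p q) t"
  using assms unfolding eval_param_def
  by (rule comm_ring_hom.resultant_map_poly[OF poly_hom.comm_ring_hom_axioms])

lemma eval_param_prod_mset: "eval_param (prod_mset X) t = (\<Prod>q\<in>#X. eval_param q t)"
proof -
  interpret comm_ring_hom "\<lambda>q. eval_param q t"
    by (rule eval_param_hom)
  show ?thesis
    by (rule hom_prod_mset)
qed

lemma eval_param_dvd: "p dvd q \<Longrightarrow> eval_param p t dvd eval_param q t"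
proof -
  interpret comm_ring_hom "\<lambda>q. eval_param q t"
    by (rule eval_param_hom)
  show "p dvd q \<Longrightarrow> eval_param p t dvd eval_param q t"
    by (rule hom_dvd)
qed

lemma DERIV_poly2_curve:
  assumes "(r has_real_derivative r') (at t)"
  shows "((\<lambda>s. poly2 q s (r s)) has_real_derivative
           poly2 (pderiv_param q) t (r t) + poly2 (pderiv q) t (r t) * r') (at t)"
proof (induction q rule: pCons_induct)
  case 0
  then show ?case by (simp add: pderiv_param_def)
next
  case (pCons a p)
  have "((\<lambda>s. poly a s + r s * poly2 p s (r s)) has_real_derivative
          poly (pderiv a) t + (r' * poly2 p t (r t)
            + (poly2 (pderiv_param p) t (r t) + poly2 (pderiv p) t (r t) * r') * r t)) (at t)"
    by (intro DERIV_add DERIV_mult poly_DERIV assms pCons.IH)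
  then show ?case
    by (simp add: poly2_pCons pderiv_param_pCons pderiv_pCons poly2_add algebra_simps)
qed

lemma DERIV_poly2_param: "((\<lambda>s. poly2 q s x) has_real_derivative poly2 (pderiv_param q) t x) (at t)"
  using DERIV_poly2_curve[of "\<lambda>s. x" 0 t q] by simp

lemma DERIV_poly2: "(poly2 q t has_real_derivative poly2 (pderiv q) t x) (at x)"
  unfolding poly2_def[abs_def] eval_param_pderiv by (rule poly_DERIV)

lemma isCont_poly2: "isCont (\<lambda>z. poly2 q (fst z) (snd z)) z"
proof (induction q rule: pCons_induct)
  case (pCons a p)
  have "isCont (\<lambda>z. poly a (fst z)) z"
    by (intro continuous_intros)
  then show ?case
    using pCons.IH by (simp add: poly2_pCons)
qed simp

lemma isCont_poly2_curve:
  assumes "isCont r t"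
  shows "isCont (\<lambda>s. poly2 q s (r s)) t"
  using continuous_at_compose[OF continuous_Pair[OF continuous_ident assms] isCont_poly2]
  by (simp add: o_def)

section \<open>\<open>C\<^sup>2\<close> functions of one real variable\<close>

lemma MVT_between:
  assumes "\<And>x. (f has_real_derivative f' x) (at x)"
  shows "\<exists>z. \<bar>z - a\<bar> \<le> \<bar>b - a\<bar> \<and> f b - f a = (b - a) * f' z"
proof (cases a b rule: linorder_cases)
  case less
  from MVT2[OF less assms] show ?thesis by force
next
  case equal
  then show ?thesis by auto
next
  case greater
  from MVT2[OF greater assms] obtain z where "b < z" "z < a" "f a - f b = (a - b) * f' z"
    by blast
  then show ?thesis by (intro exI[of _ z]) (auto simp: algebra_simps)
qed

text \<open>The partial derivatives are evaluated at intermediate points supplied by the mean value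
  theorem, so only their continuity at \<open>(t, r t)\<close> is needed.\<close>

lemma DERIV_implicit:
  fixes F Ft Fx :: "real \<Rightarrow> real \<Rightarrow> real" and r :: "real \<Rightarrow> real"
  assumes Ft: "\<And>s y. ((\<lambda>u. F u y) has_real_derivative Ft s y) (at s)"
    and Fx: "\<And>s y. (F s has_real_derivative Fx s y) (at y)"
    and cont_Ft: "isCont (\<lambda>z. Ft (fst z) (snd z)) (t, r t)"
    and cont_Fx: "isCont (Fx t) (r t)"
    and cont_r: "isCont r t"
    and nonzero: "Fx t (r t) \<noteq> 0"
    and root: "\<forall>\<^sub>F s in nhds t. F s (r s) = 0"
  shows "(r has_real_derivative - Ft t (r t) / Fx t (r t)) (at t)"
proof -
  have "\<forall>s. \<exists>z. \<bar>z - t\<bar> \<le> \<bar>s - t\<bar> \<and> F s (r s) - F t (r s) = (s - t) * Ft z (r s)"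
    using MVT_between[of "\<lambda>u. F u _" "\<lambda>z. Ft z _", OF Ft] by blast
  then obtain \<xi> where \<xi>: "\<And>s. \<bar>\<xi> s - t\<bar> \<le> \<bar>s - t\<bar> \<and> F s (r s) - F t (r s) = (s - t) * Ft (\<xi> s) (r s)"
    by metis
  have "\<forall>s. \<exists>w. \<bar>w - r t\<bar> \<le> \<bar>r s - r t\<bar> \<and> F t (r s) - F t (r t) = (r s - r t) * Fx t w"
    using MVT_between[of "F t" "Fx t", OF Fx] by blast
  then obtain \<eta> where \<eta>: "\<And>s. \<bar>\<eta> s - r t\<bar> \<le> \<bar>r s - r t\<bar> \<and> F t (r s) - F t (r t) = (r s - r t) * Fx t (\<eta> s)"
    by metis
  have r_lim: "(r \<longlongrightarrow> r t) (at t)"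
    using cont_r by (simp add: isCont_def)
  have "((\<lambda>s. \<xi> s - t) \<longlongrightarrow> 0) (at t)"
    by (rule Lim_null_comparison[of _ "\<lambda>s. \<bar>s - t\<bar>"])
      (use \<xi> in \<open>auto intro!: tendsto_eq_intros simp: LIM_zero_iff\<close>)
  then have \<xi>_lim: "(\<xi> \<longlongrightarrow> t) (at t)"
    by (simp add: LIM_zero_iff)
  have "((\<lambda>s. \<eta> s - r t) \<longlongrightarrow> 0) (at t)"
    by (rule Lim_null_comparison[of _ "\<lambda>s. \<bar>r s - r t\<bar>"])
      (use \<eta> r_lim in \<open>auto intro!: tendsto_eq_intros simp: LIM_zero_iff\<close>)
  then have \<eta>_lim: "(\<eta> \<longlongrightarrow> r t) (at t)"
    by (simp add: LIM_zero_iff)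
  have Ft_lim: "((\<lambda>s. Ft (\<xi> s) (r s)) \<longlongrightarrow> Ft t (r t)) (at t)"
    using isCont_tendsto_compose[OF cont_Ft tendsto_Pair[OF \<xi>_lim r_lim]] by simp
  have Fx_lim: "((\<lambda>s. Fx t (\<eta> s)) \<longlongrightarrow> Fx t (r t)) (at t)"
    by (rule isCont_tendsto_compose[OF cont_Fx \<eta>_lim])
  have root_t: "F t (r t) = 0"
    using eventually_nhds_x_imp_x[OF root] .
  have "\<forall>\<^sub>F s in at t. F s (r s) = 0 \<and> s \<noteq> t"
    using root by (auto simp: eventually_at_filter elim: eventually_mono)
  then have "\<forall>\<^sub>F s in at t. - Ft (\<xi> s) (r s) / Fx t (\<eta> s) = (r s - r t) / (s - t)"
    using tendsto_imp_eventually_ne[OF Fx_lim nonzero]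
  proof eventually_elim
    case (elim s)
    with root_t have "(s - t) * Ft (\<xi> s) (r s) + (r s - r t) * Fx t (\<eta> s) = 0"
      using \<xi>[of s] \<eta>[of s] by linarith
    then show ?case
      using elim by (auto simp: field_simps)
  qed
  moreover have "((\<lambda>s. - Ft (\<xi> s) (r s) / Fx t (\<eta> s)) \<longlongrightarrow> - Ft t (r t) / Fx t (r t)) (at t)"
    by (intro tendsto_intros Ft_lim Fx_lim nonzero)
  ultimately show ?thesis
    by (simp add: has_field_derivative_iff Lim_transform_eventually)
qed

lemma C2_on_subset: "C2_on U f \<Longrightarrow> V \<subseteq> U \<Longrightarrow> C2_on V f"
  unfolding C2_on_def by (blast intro: continuous_on_subset)

lemma C2_on_imp_isCont: "C2_on U f \<Longrightarrow> t \<in> U \<Longrightarrow> isCont f t"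
  unfolding C2_on_def by (blast intro: DERIV_isCont)

lemma C2_on_cong:
  assumes "open U" "\<And>t. t \<in> U \<Longrightarrow> f t = g t" "C2_on U g"
  shows "C2_on U f"
proof -
  obtain g1 g2 where g: "\<And>t. t \<in> U \<Longrightarrow>
      (g has_real_derivative g1 t) (at t) \<and> (g1 has_real_derivative g2 t) (at t)"
    and "continuous_on U g2"
    using assms(3) unfolding C2_on_def by blast
  moreover have "(f has_real_derivative g1 t) (at t)" if "t \<in> U" for t
    using has_field_derivative_transform_within_open[OF _ assms(1) that, of g _ f] g[OF that] assms(2)
    by simp
  ultimately show ?thesis
    unfolding C2_on_def by blast
qed

text \<open>The local derivatives glue to \<open>deriv f\<close> and \<open>deriv (deriv f)\<close>.\<close>

lemma C2_on_local:
  assumes "open U" and local: "\<And>t. t \<in> U \<Longrightarrow> \<exists>e>0. C2_on (ball t e) f"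
  shows "C2_on U f"
proof -
  have "(f has_real_derivative deriv f s) (at s) \<and> (deriv f has_real_derivative deriv (deriv f) s) (at s)
      \<and> isCont (deriv (deriv f)) s" if "s \<in> U" for s
  proof -
    obtain e f1 f2 where "e > 0"
      and d: "\<And>u. u \<in> ball s e \<Longrightarrow>
        (f has_real_derivative f1 u) (at u) \<and> (f1 has_real_derivative f2 u) (at u)"
      and c: "continuous_on (ball s e) f2"
      using local \<open>s \<in> U\<close> unfolding C2_on_def by blast
    then have s: "s \<in> ball s e"
      by simp
    have f1: "deriv f u = f1 u" if "u \<in> ball s e" for u
      using d[OF that] DERIV_imp_deriv by blast
    have d1: "(deriv f has_real_derivative f2 u) (at u)" if "u \<in> ball s e" for u
      using has_field_derivative_transform_within_open[OF _ open_ball that, of f1 _ "deriv f"] d[OF that] f1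
      by simp
    have f2: "deriv (deriv f) u = f2 u" if "u \<in> ball s e" for u
      using d1[OF that] by (rule DERIV_imp_deriv)
    have "isCont f2 s"
      using c s by (simp add: continuous_on_eq_continuous_at)
    moreover have "\<forall>\<^sub>F u in nhds s. deriv (deriv f) u = f2 u"
      using eventually_nhds_in_open[OF open_ball s] by (rule eventually_mono) (rule f2)
    ultimately have "isCont (deriv (deriv f)) s"
      using isCont_cong by blast
    then show ?thesis
      using d[OF s] f1[OF s] d1[OF s] f2[OF s] by simp
  qed
  then show ?thesis
    unfolding C2_on_def by (blast intro: continuous_at_imp_continuous_on)
qed

lemma C2_on_sqrt:
  assumes "C2_on U g" and pos: "\<And>t. t \<in> U \<Longrightarrow> g t > 0"
  shows "C2_on U (\<lambda>t. sqrt (g t))"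
proof -
  obtain g1 g2 where g: "\<And>t. t \<in> U \<Longrightarrow>
      (g has_real_derivative g1 t) (at t) \<and> (g1 has_real_derivative g2 t) (at t)"
    and "continuous_on U g2"
    using assms(1) unfolding C2_on_def by blast
  define h1 where "h1 t = g1 t / (2 * sqrt (g t))" for t
  define h2 where
    "h2 t = (g2 t * (2 * sqrt (g t)) - g1 t * (g1 t / sqrt (g t))) / (2 * sqrt (g t) * (2 * sqrt (g t)))"
    for t
  have "((\<lambda>t. sqrt (g t)) has_real_derivative h1 t) (at t)" if "t \<in> U" for t
    using DERIV_chain2[of sqrt _ g, OF DERIV_real_sqrt[OF pos[OF that]] conjunct1[OF g[OF that]]] pos[OF that]
    by (simp add: h1_def field_simps)
  moreover have "(h1 has_real_derivative h2 t) (at t)" if "t \<in> U" for t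
  proof -
    have "((\<lambda>t. 2 * sqrt (g t)) has_real_derivative 2 * (inverse (sqrt (g t)) / 2 * g1 t)) (at t)"
      by (intro DERIV_cmult DERIV_chain2[of sqrt _ g, OF DERIV_real_sqrt[OF pos[OF that]]]) (use g that in blast)
    from DERIV_divide[OF conjunct2[OF g[OF that]] this] show ?thesis
      using pos[OF that] unfolding h1_def[abs_def] h2_def by (simp add: field_simps)
  qed
  moreover have "continuous_on U h2"
  proof -
    have "continuous_on U g" "continuous_on U g1"
      using g by (auto intro!: continuous_at_imp_continuous_on DERIV_isCont)
    moreover have "g t \<noteq> 0" if "t \<in> U" for t
      using pos[OF that] by simp
    ultimately show ?thesis
      unfolding h2_def using \<open>continuous_on U g2\<close>
      by (intro continuous_intros) auto
  qed
  ultimately show ?thesis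
    unfolding C2_on_def by blast
qed

section \<open>Simple roots of a polynomial family\<close>

text \<open>Scaling by \<open>c = q\<^sub>x(t\<^sub>0, x\<^sub>0)\<close> makes \<open>x \<mapsto> c q(t, x)\<close> increasing near \<open>x\<^sub>0\<close>,
  whatever the sign of \<open>c\<close>.\<close>

lemma simple_root_persists:
  assumes "poly2 q t0 x0 = 0" "poly2 (pderiv q) t0 x0 \<noteq> 0" "e > 0"
  shows "\<forall>\<^sub>F t in nhds t0. \<exists>x. \<bar>x - x0\<bar> < e \<and> poly2 q t x = 0"
proof -
  define c where "c = poly2 (pderiv q) t0 x0"
  define f where "f t x = c * poly2 q t x" for t x
  have f_deriv: "(f t has_real_derivative c * poly2 (pderiv q) t x) (at x)" for t x
    unfolding f_def by (intro DERIV_cmult DERIV_poly2)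
  have "c * c > 0"
    using assms(2) by (auto simp: c_def zero_less_mult_iff linorder_neq_iff)
  then obtain d1 d2 where "d1 > 0" "\<And>h. 0 < h \<Longrightarrow> h < d1 \<Longrightarrow> f t0 x0 < f t0 (x0 + h)"
    and "d2 > 0" "\<And>h. 0 < h \<Longrightarrow> h < d2 \<Longrightarrow> f t0 (x0 - h) < f t0 x0"
    using DERIV_pos_inc_right[OF f_deriv] DERIV_pos_inc_left[OF f_deriv] by (metis c_def)
  moreover define h where "h = min (min d1 d2) e / 2"
  ultimately have h: "0 < h" "h < e" "f t0 (x0 - h) < 0" "0 < f t0 (x0 + h)"
    using assms(1,3) by (auto simp: f_def)
  have f_lim: "(\<lambda>t. f t x) \<midarrow>t0\<rightarrow> f t0 x" for x
    unfolding f_def by (intro tendsto_intros isCont_tendsto_compose[OF DERIV_isCont[OF DERIV_poly2_param]])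
  have "\<forall>\<^sub>F t in nhds t0. f t (x0 - h) < 0" "\<forall>\<^sub>F t in nhds t0. 0 < f t (x0 + h)"
    using order_tendstoD(2)[OF f_lim h(3)] order_tendstoD(1)[OF f_lim h(4)] h(3,4)
    by (simp_all add: eventually_nhds_conv_at)
  then show ?thesis
  proof eventually_elim
    case (elim t)
    have "continuous_on {x0 - h..x0 + h} (f t)"
      by (intro continuous_at_imp_continuous_on ballI DERIV_isCont[OF f_deriv])
    with elim h(1) obtain x where "x0 - h \<le> x" "x \<le> x0 + h" "f t x = 0"
      using IVT'[of "f t" "x0 - h" 0 "x0 + h"] by auto
    then show ?case
      using h(2) assms(2) by (intro exI[of _ x]) (auto simp: f_def c_def)
  qed
qed

lemma poly2_sign_near:
  assumes "poly2 p t0 x0 \<noteq> 0"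
  shows "\<exists>d>0. \<forall>t y. \<bar>t - t0\<bar> < d \<longrightarrow> \<bar>y - x0\<bar> < d \<longrightarrow> poly2 p t0 x0 * poly2 p t y > 0"
proof -
  define c where "c = poly2 p t0 x0"
  have "isCont (\<lambda>z. c * poly2 p (fst z) (snd z)) (t0, x0)"
    by (intro continuous_intros isCont_poly2)
  moreover have "c * poly2 p (fst (t0, x0)) (snd (t0, x0)) > 0"
    using assms by (auto simp: c_def zero_less_mult_iff linorder_neq_iff)
  ultimately have "\<forall>\<^sub>F z in nhds (t0, x0). c * poly2 p (fst z) (snd z) > 0"
    unfolding eventually_nhds_conv_at isCont_def by (auto intro: order_tendstoD)
  then obtain d where d: "d > 0" "\<And>z. dist z (t0, x0) < d \<Longrightarrow> c * poly2 p (fst z) (snd z) > 0"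
    unfolding eventually_nhds_metric by blast
  have "c * poly2 p t y > 0" if "\<bar>t - t0\<bar> < d / 2" "\<bar>y - x0\<bar> < d / 2" for t y
  proof -
    have "dist (t, y) (t0, x0) \<le> \<bar>t - t0\<bar> + \<bar>y - x0\<bar>"
      using sqrt_sum_squares_le_sum_abs[of "t - t0" "y - x0"] by (simp add: dist_Pair_Pair dist_real_def)
    then show ?thesis
      using d(2)[of "(t, y)"] that by simp
  qed
  then show ?thesis
    using d(1) by (intro exI[of _ "d / 2"]) (simp add: c_def)
qed

lemma poly2_root_unique:
  assumes incr: "\<And>y. \<bar>y - x0\<bar> < d \<Longrightarrow> c * poly2 (pderiv q) t y > 0"
    and "\<bar>y1 - x0\<bar> < d" "\<bar>y2 - x0\<bar> < d" "poly2 q t y1 = 0" "poly2 q t y2 = 0"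
  shows "y1 = y2"
proof -
  have "c * poly2 q t a < c * poly2 q t b"
    if "a < b" "\<bar>a - x0\<bar> < d" "\<bar>b - x0\<bar> < d" for a b
  proof (rule DERIV_pos_imp_increasing[OF \<open>a < b\<close>])
    fix x assume "a \<le> x" "x \<le> b"
    with that have "\<bar>x - x0\<bar> < d"
      by linarith
    then show "\<exists>y. ((\<lambda>y. c * poly2 q t y) has_real_derivative y) (at x) \<and> 0 < y"
      using incr DERIV_cmult[OF DERIV_poly2] by blast
  qed
  from this[of y1 y2] this[of y2 y1] show ?thesis
    using assms(2-) by (cases y1 y2 rule: linorder_cases) auto
qed

lemma C2_on_root_curve:
  assumes "open U" "continuous_on U r"
    and root: "\<And>t. t \<in> U \<Longrightarrow> poly2 q t (r t) = 0"
    and simple: "\<And>t. t \<in> U \<Longrightarrow> poly2 (pderiv q) t (r t) \<noteq> 0"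
  shows "C2_on U r"
proof -
  define N where "N t = poly2 (pderiv_param q) t (r t)" for t
  define D where "D t = poly2 (pderiv q) t (r t)" for t
  define r1 where "r1 t = - (N t / D t)" for t
  define N' where
    "N' t = poly2 (pderiv_param (pderiv_param q)) t (r t) + poly2 (pderiv (pderiv_param q)) t (r t) * r1 t" for t
  define D' where
    "D' t = poly2 (pderiv_param (pderiv q)) t (r t) + poly2 (pderiv (pderiv q)) t (r t) * r1 t" for t
  define r2 where "r2 t = - ((N' t * D t - N t * D' t) / (D t * D t))" for t
  have cont_r: "isCont r t" if "t \<in> U" for t
    using assms(1,2) that by (simp add: continuous_on_eq_continuous_at)
  have r1: "(r has_real_derivative r1 t) (at t)" if t: "t \<in> U" for t
  proof -
    have "\<forall>\<^sub>F s in nhds t. poly2 q s (r s) = 0"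
      using eventually_nhds_in_open[OF assms(1) t] by (rule eventually_mono) (rule root)
    then have "(r has_real_derivative - N t / D t) (at t)"
      unfolding N_def D_def
      using DERIV_implicit[OF DERIV_poly2_param DERIV_poly2 isCont_poly2 DERIV_isCont[OF DERIV_poly2]]
        cont_r[OF t] simple[OF t] by blast
    then show ?thesis
      by (simp add: r1_def)
  qed
  have r2: "(r1 has_real_derivative r2 t) (at t)" if t: "t \<in> U" for t
  proof -
    have "(N has_real_derivative N' t) (at t)" "(D has_real_derivative D' t) (at t)"
      unfolding N_def N'_def D_def D'_def by (intro DERIV_poly2_curve r1[OF t])+
    moreover have "D t \<noteq> 0"
      using simple[OF t] by (simp add: D_def)
    ultimately show ?thesis
      unfolding r1_def[abs_def] r2_def by (intro DERIV_minus DERIV_divide)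
  qed
  have "isCont r2 t" if t: "t \<in> U" for t
  proof -
    have "isCont N t" "isCont D t" "D t \<noteq> 0"
      unfolding N_def D_def using cont_r[OF t] simple[OF t] by (auto intro: isCont_poly2_curve)
    then have cont_r1: "isCont r1 t"
      unfolding r1_def[abs_def] by (intro continuous_intros)
    have "isCont N' t" "isCont D' t"
      unfolding N'_def[abs_def] D'_def[abs_def]
      by (intro continuous_intros isCont_poly2_curve cont_r[OF t] cont_r1)+
    with \<open>isCont N t\<close> \<open>isCont D t\<close> \<open>D t \<noteq> 0\<close> show ?thesis
      unfolding r2_def[abs_def] by (intro continuous_intros) auto
  qed
  then show ?thesis
    unfolding C2_on_def using r1 r2 by (blast intro: continuous_at_imp_continuous_on)
qed

lemma continuous_on_isolated_root:
  assumes "open U"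
    and root: "\<And>t. t \<in> U \<Longrightarrow> \<bar>r t - x0\<bar> < \<delta> \<and> poly2 q t (r t) = 0"
    and unique: "\<And>t y. t \<in> U \<Longrightarrow> \<bar>y - x0\<bar> < \<delta> \<Longrightarrow> poly2 q t y = 0 \<Longrightarrow> y = r t"
    and simple: "\<And>t. t \<in> U \<Longrightarrow> poly2 (pderiv q) t (r t) \<noteq> 0"
  shows "continuous_on U r"
proof (intro continuous_at_imp_continuous_on ballI)
  fix s assume s: "s \<in> U"
  show "isCont r s"
    unfolding isCont_def
  proof (rule tendstoI)
    fix \<epsilon> :: real assume "\<epsilon> > 0"
    define \<epsilon>' where "\<epsilon>' = min \<epsilon> (\<delta> - \<bar>r s - x0\<bar>)"
    have "\<epsilon>' > 0"
      using \<open>\<epsilon> > 0\<close> root[OF s] by (simp add: \<epsilon>'_def)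
    from simple_root_persists[OF conjunct2[OF root[OF s]] simple[OF s] this]
      eventually_nhds_in_open[OF assms(1) s]
    have "\<forall>\<^sub>F t in nhds s. dist (r t) (r s) < \<epsilon>"
    proof eventually_elim
      case (elim t)
      then obtain y where y: "\<bar>y - r s\<bar> < \<epsilon>'" "poly2 q t y = 0"
        by blast
      then have "\<bar>y - x0\<bar> < \<delta>"
        unfolding \<epsilon>'_def by linarith
      with y elim have "y = r t"
        using unique by blast
      with y show ?case
        by (simp add: dist_real_def \<epsilon>'_def)
    qed
    then show "\<forall>\<^sub>F t in at s. dist (r t) (r s) < \<epsilon>"
      by (simp add: eventually_nhds_conv_at)
  qed
qed

lemma simple_root_isolated:
  assumes "poly2 (pderiv q) t0 x0 \<noteq> 0" "d > 0"
  obtains e \<delta> where "e > 0" "0 < \<delta>" "\<delta> \<le> d"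
    "\<And>t y. t \<in> ball t0 e \<Longrightarrow> \<bar>y - x0\<bar> < \<delta> \<Longrightarrow> poly2 (pderiv q) t y \<noteq> 0"
    "\<And>t y y'. t \<in> ball t0 e \<Longrightarrow> \<bar>y - x0\<bar> < \<delta> \<Longrightarrow> \<bar>y' - x0\<bar> < \<delta> \<Longrightarrow>
      poly2 q t y = 0 \<Longrightarrow> poly2 q t y' = 0 \<Longrightarrow> y = y'"
proof -
  obtain e where "e > 0" and sign: "\<And>t y. \<bar>t - t0\<bar> < e \<Longrightarrow> \<bar>y - x0\<bar> < e \<Longrightarrow>
      poly2 (pderiv q) t0 x0 * poly2 (pderiv q) t y > 0"
    using poly2_sign_near[OF assms(1)] by blast
  define \<delta> where "\<delta> = min d e / 2"
  have \<delta>: "0 < \<delta>" "\<delta> \<le> d" "\<delta> < e"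
    using \<open>e > 0\<close> assms(2) by (auto simp: \<delta>_def)
  have sign': "poly2 (pderiv q) t0 x0 * poly2 (pderiv q) t y > 0" if "t \<in> ball t0 e" "\<bar>y - x0\<bar> < \<delta>" for t y
    using sign that \<delta>(3) by (simp add: dist_real_def abs_minus_commute)
  show ?thesis
  proof (rule that[OF \<open>e > 0\<close> \<delta>(1,2)])
    show "poly2 (pderiv q) t y \<noteq> 0" if "t \<in> ball t0 e" "\<bar>y - x0\<bar> < \<delta>" for t y
      using sign'[OF that] by auto
    show "y = y'" if "t \<in> ball t0 e" "\<bar>y - x0\<bar> < \<delta>" "\<bar>y' - x0\<bar> < \<delta>" "poly2 q t y = 0" "poly2 q t y' = 0"
      for t y y'
      using poly2_root_unique[of x0 \<delta> "poly2 (pderiv q) t0 x0" q t y y'] sign'[OF that(1)] that(2-) by blast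
  qed
qed

lemma simple_root_branch:
  assumes "poly2 q t0 x0 = 0" "poly2 (pderiv q) t0 x0 \<noteq> 0" "d > 0"
  obtains e r where "e > 0" "r t0 = x0" "C2_on (ball t0 e) r"
    "\<And>t. t \<in> ball t0 e \<Longrightarrow> \<bar>r t - x0\<bar> < d \<and> poly2 q t (r t) = 0"
proof -
  obtain e1 \<delta> where "e1 > 0" "0 < \<delta>" "\<delta> \<le> d"
    and simple: "\<And>t y. t \<in> ball t0 e1 \<Longrightarrow> \<bar>y - x0\<bar> < \<delta> \<Longrightarrow> poly2 (pderiv q) t y \<noteq> 0"
    and unique: "\<And>t y y'. t \<in> ball t0 e1 \<Longrightarrow> \<bar>y - x0\<bar> < \<delta> \<Longrightarrow> \<bar>y' - x0\<bar> < \<delta> \<Longrightarrow>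
      poly2 q t y = 0 \<Longrightarrow> poly2 q t y' = 0 \<Longrightarrow> y = y'"
    using simple_root_isolated[OF assms(2,3)] by blast
  obtain e2 where "e2 > 0" and exists: "\<And>t. dist t t0 < e2 \<Longrightarrow> \<exists>y. \<bar>y - x0\<bar> < \<delta> \<and> poly2 q t y = 0"
    using simple_root_persists[OF assms(1,2) \<open>0 < \<delta>\<close>] unfolding eventually_nhds_metric by blast
  define e where "e = min e1 e2"
  have ball: "t \<in> ball t0 e1 \<and> dist t t0 < e2" if "t \<in> ball t0 e" for t
    using that by (simp add: e_def dist_commute)
  define r where "r t = (THE y. \<bar>y - x0\<bar> < \<delta> \<and> poly2 q t y = 0)" for t
  have root: "\<bar>r t - x0\<bar> < \<delta> \<and> poly2 q t (r t) = 0" if t: "t \<in> ball t0 e" for t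
  proof -
    obtain y where y: "\<bar>y - x0\<bar> < \<delta>" "poly2 q t y = 0"
      using exists ball[OF t] by blast
    then have "r t = y"
      unfolding r_def using unique ball[OF t] by (intro the_equality) auto
    with y show ?thesis
      by simp
  qed
  have unique_r: "y = r t" if "t \<in> ball t0 e" "\<bar>y - x0\<bar> < \<delta>" "poly2 q t y = 0" for t y
    using unique ball[OF that(1)] that(2,3) root[OF that(1)] by blast
  have simple_r: "poly2 (pderiv q) t (r t) \<noteq> 0" if "t \<in> ball t0 e" for t
    using simple ball root that by blast
  show ?thesis
  proof (rule that)
    show "e > 0"
      using \<open>e1 > 0\<close> \<open>e2 > 0\<close> by (simp add: e_def)
    then show "r t0 = x0"
      using unique_r[of t0 x0] \<open>0 < \<delta>\<close> assms(1) by simp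
    show "C2_on (ball t0 e) r"
      using continuous_on_isolated_root[OF open_ball root unique_r simple_r]
      by (rule C2_on_root_curve[OF open_ball _ conjunct2[OF root] simple_r])
  qed (use root \<open>\<delta> \<le> d\<close> in force)
qed

lemma proots_eq_mset_set:
  fixes p :: "real poly"
  assumes "p \<noteq> 0" "finite A" "degree p \<le> card A" "\<And>x. x \<in> A \<Longrightarrow> poly p x = 0"
  shows "proots p = mset_set A"
proof -
  have "mset_set A \<subseteq># mset_set (set_mset (proots p))"
    using assms poly_roots_finite[OF assms(1)] by (intro subset_imp_msubset_mset_set) auto
  then have sub: "mset_set A \<subseteq># proots p"
    using mset_set_set_mset_msubset subset_mset.order_trans by blast
  moreover have "size (proots p) \<le> size (mset_set A)"
    using size_proots_le[of p] assms(3) by simp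
  ultimately show ?thesis
    using mset_subset_size by (metis subset_mset.le_less not_le)
qed

lemma proots_rsquarefree:
  fixes p :: "real poly"
  assumes "rsquarefree p"
  shows "proots p = mset_set {x. poly p x = 0}"
proof -
  have "p \<noteq> 0"
    using assms by (simp add: rsquarefree_def)
  show ?thesis
  proof (rule multiset_eqI)
    fix x
    show "count (proots p) x = count (mset_set {x. poly p x = 0}) x"
      using rsquarefree_root_order[OF assms, of x] order_root[of p x] \<open>p \<noteq> 0\<close> poly_roots_finite[of p]
      by (cases "poly p x = 0") auto
  qed
qed

lemma finite_set_separated:
  fixes S :: "real set"
  assumes "finite S"
  obtains d where "d > 0" "\<And>x y. x \<in> S \<Longrightarrow> y \<in> S \<Longrightarrow> x \<noteq> y \<Longrightarrow> 2 * d < \<bar>x - y\<bar>"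
proof -
  have "\<forall>\<^sub>F d in at_right 0. \<forall>x\<in>S. \<forall>y\<in>S. x \<noteq> y \<longrightarrow> 2 * d < \<bar>x - y\<bar>"
  proof (intro eventually_ball_finite assms ballI)
    fix x y assume "x \<in> S" "y \<in> S"
    show "\<forall>\<^sub>F d in at_right 0. x \<noteq> y \<longrightarrow> 2 * d < \<bar>x - y\<bar>"
    proof (cases "x = y")
      case False
      then show ?thesis
        unfolding eventually_at_right_field by (auto intro!: exI[of _ "\<bar>x - y\<bar> / 2"])
    qed simp
  qed
  then obtain b where "b > 0" and b: "\<And>d. 0 < d \<Longrightarrow> d < b \<Longrightarrow> \<forall>x\<in>S. \<forall>y\<in>S. x \<noteq> y \<longrightarrow> 2 * d < \<bar>x - y\<bar>"
    unfolding eventually_at_right_field by auto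
  then show ?thesis
    using b[of "b / 2"] by (intro that[of "b / 2"]) auto
qed

lemma proots_eval_param_near:
  assumes lc: "\<And>t. poly (lead_coeff q) t \<noteq> 0"
    and sf: "rsquarefree (eval_param q t0)"
    and split: "size (proots (eval_param q t0)) = degree q"
  obtains e r where "e > 0"
    "\<And>t. t \<in> ball t0 e \<Longrightarrow> proots (eval_param q t) = image_mset (\<lambda>x. r x t) (proots (eval_param q t0))"
    "\<And>x. x \<in># proots (eval_param q t0) \<Longrightarrow> r x t0 = x \<and> C2_on (ball t0 e) (r x)"
proof -
  define S where "S = {x. poly2 q t0 x = 0}"
  have S: "proots (eval_param q t0) = mset_set S"
    unfolding S_def poly2_def by (rule proots_rsquarefree[OF sf])
  have "finite S"
    unfolding S_def poly2_def using poly_roots_finite eval_param_nonzero[OF lc] by blast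
  then obtain d where "d > 0" and sep: "\<And>x y. x \<in> S \<Longrightarrow> y \<in> S \<Longrightarrow> x \<noteq> y \<Longrightarrow> 2 * d < \<bar>x - y\<bar>"
    using finite_set_separated by blast
  have "\<exists>e r. e > 0 \<and> r t0 = x \<and> C2_on (ball t0 e) r \<and> (\<forall>t\<in>ball t0 e. \<bar>r t - x\<bar> < d \<and> poly2 q t (r t) = 0)"
    if "x \<in> S" for x
  proof -
    have "poly2 q t0 x = 0" "poly2 (pderiv q) t0 x \<noteq> 0"
      using sf that unfolding rsquarefree_roots S_def poly2_def eval_param_pderiv by auto
    from simple_root_branch[OF this \<open>d > 0\<close>] show ?thesis
      by metis
  qed
  then obtain E R where E: "\<And>x. x \<in> S \<Longrightarrow> E x > 0 \<and> R x t0 = x \<and> C2_on (ball t0 (E x)) (R x)"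
    and R: "\<And>x t. x \<in> S \<Longrightarrow> t \<in> ball t0 (E x) \<Longrightarrow> \<bar>R x t - x\<bar> < d \<and> poly2 q t (R x t) = 0"
    by metis
  define e where "e = Min (insert 1 (E ` S))"
  have "e > 0"
    unfolding e_def using E \<open>finite S\<close> by (subst Min_gr_iff) auto
  have sub: "ball t0 e \<subseteq> ball t0 (E x)" if "x \<in> S" for x
    using that \<open>finite S\<close> by (intro subset_ball) (simp add: e_def)
  show ?thesis
  proof (rule that[OF \<open>e > 0\<close>])
    fix t assume "t \<in> ball t0 e"
    then have Rt: "\<bar>R x t - x\<bar> < d \<and> poly2 q t (R x t) = 0" if "x \<in> S" for x
      using R[OF that] sub[OF that] by blast
    have inj: "inj_on (\<lambda>x. R x t) S"
    proof (rule inj_onI)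
      fix x y assume "x \<in> S" "y \<in> S" "R x t = R y t"
      with Rt[of x] Rt[of y] have "\<bar>x - y\<bar> < 2 * d"
        by linarith
      with sep[OF \<open>x \<in> S\<close> \<open>y \<in> S\<close>] show "x = y"
        by linarith
    qed
    have "proots (eval_param q t) = mset_set ((\<lambda>x. R x t) ` S)"
    proof (rule proots_eq_mset_set)
      show "degree (eval_param q t) \<le> card ((\<lambda>x. R x t) ` S)"
        using split degree_eval_param[OF lc] card_image[OF inj] by (simp add: S)
    qed (use eval_param_nonzero[OF lc] \<open>finite S\<close> Rt in \<open>auto simp: poly2_def\<close>)
    then show "proots (eval_param q t) = image_mset (\<lambda>x. R x t) (proots (eval_param q t0))"
      by (simp add: S image_mset_mset_set[OF inj])
  next
    fix x assume "x \<in># proots (eval_param q t0)"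
    then show "R x t0 = x \<and> C2_on (ball t0 e) (R x)"
      using E sub \<open>finite S\<close> by (auto simp: S intro: C2_on_subset)
  qed
qed

section \<open>Separated factorizations\<close>

lemma sorted_list_of_multiset_nth_near:
  fixes g :: "'a \<Rightarrow> real \<Rightarrow> real"
  assumes inj: "\<And>j j'. j \<in># J \<Longrightarrow> j' \<in># J \<Longrightarrow> g j t0 = g j' t0 \<Longrightarrow> j = j'"
    and cont: "\<And>j. j \<in># J \<Longrightarrow> isCont (g j) t0"
    and k: "k < size J"
  shows "\<exists>j\<in>#J. \<forall>\<^sub>F t in nhds t0. sorted_list_of_multiset (image_mset (\<lambda>j. g j t) J) ! k = g j t"
proof -
  obtain js where js: "mset js = J" "sorted (map (\<lambda>j. g j t0) js)"
    by (metis ex_mset mset_sort sorted_sort_key)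
  have "\<forall>j\<in>set_mset J. \<forall>j'\<in>set_mset J. \<forall>\<^sub>F t in nhds t0. g j t0 < g j' t0 \<longrightarrow> g j t < g j' t"
  proof (intro ballI)
    fix j j' assume "j \<in># J" "j' \<in># J"
    then have lim: "(\<lambda>t. g j' t - g j t) \<midarrow>t0\<rightarrow> g j' t0 - g j t0"
      using cont by (intro tendsto_diff) (simp_all add: isCont_def)
    show "\<forall>\<^sub>F t in nhds t0. g j t0 < g j' t0 \<longrightarrow> g j t < g j' t"
    proof (cases "g j t0 < g j' t0")
      case True
      then have "\<forall>\<^sub>F t in at t0. 0 < g j' t - g j t"
        using order_tendstoD(1)[OF lim, of 0] by simp
      with True show ?thesis
        by (auto simp: eventually_nhds_conv_at elim: eventually_mono)
    qed simp
  qed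
  then have "\<forall>\<^sub>F t in nhds t0. \<forall>j\<in>set_mset J. \<forall>j'\<in>set_mset J. g j t0 < g j' t0 \<longrightarrow> g j t < g j' t"
    by (intro eventually_ball_finite) (auto intro: eventually_ball_finite)
  then have "\<forall>\<^sub>F t in nhds t0. sorted (map (\<lambda>j. g j t) js)"
  proof eventually_elim
    case (elim t)
    show ?case
      unfolding sorted_iff_nth_mono
    proof (intro allI impI)
      fix a b assume ab: "a \<le> b" "b < length (map (\<lambda>j. g j t) js)"
      then have "js ! a \<in># J" "js ! b \<in># J" "g (js ! a) t0 \<le> g (js ! b) t0"
        using js sorted_nth_mono[OF js(2), of a b] by auto
      then show "map (\<lambda>j. g j t) js ! a \<le> map (\<lambda>j. g j t) js ! b"
        using elim inj ab by (cases "g (js ! a) t0 = g (js ! b) t0") force+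
    qed
  qed
  moreover have "sorted_list_of_multiset (image_mset (\<lambda>j. g j t) J) ! k = g (js ! k) t"
    if "sorted (map (\<lambda>j. g j t) js)" for t
  proof -
    have "sorted_list_of_multiset (image_mset (\<lambda>j. g j t) J) = sort (map (\<lambda>j. g j t) js)"
      by (metis js(1) mset_map sorted_list_of_multiset_mset)
    also have "\<dots> = map (\<lambda>j. g j t) js"
      using that by (rule sorted_sort_id)
    finally show ?thesis
      using k by (simp flip: js(1))
  qed
  ultimately have "\<forall>\<^sub>F t in nhds t0. sorted_list_of_multiset (image_mset (\<lambda>j. g j t) J) ! k = g (js ! k) t"
    by (rule eventually_mono)
  moreover have "js ! k \<in># J"
    using k by (simp flip: js(1))
  ultimately show ?thesis
    by blast
qed

lemma size_proots_eq_degree_dvd: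
  fixes f g :: "real poly"
  assumes "f \<noteq> 0" "size (proots f) = degree f" "g dvd f"
  shows "size (proots g) = degree g"
proof -
  obtain h where h: "f = g * h"
    using assms(3) by blast
  with assms(1) have "g \<noteq> 0" "h \<noteq> 0"
    by auto
  then show ?thesis
    using assms(2) size_proots_le[of g] size_proots_le[of h]
    by (simp add: h proots_mult degree_mult_eq)
qed

lemma proots_eval_param_prod_mset:
  assumes "\<And>p. p \<in># PF \<Longrightarrow> poly (lead_coeff p) t \<noteq> 0"
  shows "proots (eval_param (prod_mset PF) t) = (\<Sum>p\<in>#PF. proots (eval_param p t))"
proof -
  have "0 \<notin># image_mset (\<lambda>p. eval_param p t) PF"
    using eval_param_nonzero[OF assms] by auto
  from proots_prod_mset[OF this] show ?thesis
    unfolding eval_param_prod_mset image_mset.compositionality o_def .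
qed

lemma size_proots_eval_param_factor:
  assumes lc: "\<And>p. p \<in># PF \<Longrightarrow> poly (lead_coeff p) t \<noteq> 0"
    and split: "size (proots (eval_param (prod_mset PF) t)) = degree (eval_param (prod_mset PF) t)"
    and "p \<in># PF"
  shows "size (proots (eval_param p t)) = degree p"
proof -
  have "eval_param (prod_mset PF) t \<noteq> 0"
    using eval_param_nonzero[OF lc] by (auto simp: eval_param_prod_mset)
  moreover have "eval_param p t dvd eval_param (prod_mset PF) t"
    using \<open>p \<in># PF\<close> by (intro eval_param_dvd dvd_prod_mset)
  ultimately show ?thesis
    using size_proots_eq_degree_dvd[OF _ split] degree_eval_param[OF lc[OF \<open>p \<in># PF\<close>]] by simp
qed

text \<open>A branch is indexed by its factor and its value at \<open>t\<^sub>0\<close>; it is repeated as often as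
  the factor occurs in \<open>PF\<close>.\<close>

lemma proots_prod_eval_param_near:
  fixes PF :: "real poly poly multiset"
  assumes lc: "\<And>p t. p \<in># PF \<Longrightarrow> poly (lead_coeff p) t \<noteq> 0"
    and sf: "\<And>p. p \<in># PF \<Longrightarrow> rsquarefree (eval_param p t0)"
    and disjoint: "\<And>p p' x. p \<in># PF \<Longrightarrow> p' \<in># PF \<Longrightarrow> p \<noteq> p' \<Longrightarrow> poly2 p t0 x = 0 \<Longrightarrow> poly2 p' t0 x \<noteq> 0"
    and split: "size (proots (eval_param (prod_mset PF) t0)) = degree (eval_param (prod_mset PF) t0)"
  obtains e and J :: "(real poly poly \<times> real) multiset" and g where "e > 0"
    "\<And>t. t \<in> ball t0 e \<Longrightarrow> proots (eval_param (prod_mset PF) t) = image_mset (\<lambda>j. g j t) J"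
    "\<And>j. j \<in># J \<Longrightarrow> C2_on (ball t0 e) (g j)"
    "\<And>j j'. j \<in># J \<Longrightarrow> j' \<in># J \<Longrightarrow> g j t0 = g j' t0 \<Longrightarrow> j = j'"
proof -
  have nonzero: "eval_param p t \<noteq> 0" if "p \<in># PF" for p t
    using eval_param_nonzero[OF lc[OF that]] .
  have proots_prod: "proots (eval_param (prod_mset PF) t) = (\<Sum>p\<in>#PF. proots (eval_param p t))" for t
    by (rule proots_eval_param_prod_mset) (rule lc)
  have split_factor: "size (proots (eval_param p t0)) = degree p" if "p \<in># PF" for p
    by (rule size_proots_eval_param_factor[OF _ split that]) (rule lc)
  have "\<exists>e r. e > 0
      \<and> (\<forall>t\<in>ball t0 e. proots (eval_param p t) = image_mset (\<lambda>x. r x t) (proots (eval_param p t0)))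
      \<and> (\<forall>x\<in>#proots (eval_param p t0). r x t0 = x \<and> C2_on (ball t0 e) (r x))" if "p \<in># PF" for p
    using proots_eval_param_near[OF lc[OF that] sf[OF that] split_factor[OF that]] by metis
  then obtain E R where "\<And>p. p \<in># PF \<Longrightarrow> E p > 0"
    and R_roots: "\<And>p t. p \<in># PF \<Longrightarrow> t \<in> ball t0 (E p) \<Longrightarrow>
        proots (eval_param p t) = image_mset (\<lambda>x. R p x t) (proots (eval_param p t0))"
    and R_C2: "\<And>p x. p \<in># PF \<Longrightarrow> x \<in># proots (eval_param p t0) \<Longrightarrow> R p x t0 = x \<and> C2_on (ball t0 (E p)) (R p x)"
    by metis
  define e where "e = Min (insert 1 (E ` set_mset PF))"
  have "e > 0"
    unfolding e_def using \<open>\<And>p. p \<in># PF \<Longrightarrow> E p > 0\<close> by (subst Min_gr_iff) auto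
  have sub: "ball t0 e \<subseteq> ball t0 (E p)" if "p \<in># PF" for p
    using that by (intro subset_ball) (simp add: e_def)
  define J where "J = (\<Sum>p\<in>#PF. image_mset (Pair p) (proots (eval_param p t0)))"
  define g where "g j t = R (fst j) (snd j) t" for j t
  have J: "fst j \<in># PF \<and> snd j \<in># proots (eval_param (fst j) t0)" if "j \<in># J" for j
    using that by (auto simp: J_def)
  show ?thesis
  proof (rule that[OF \<open>e > 0\<close>])
    fix t assume "t \<in> ball t0 e"
    then have "proots (eval_param (prod_mset PF) t)
        = (\<Sum>p\<in>#PF. image_mset (\<lambda>x. R p x t) (proots (eval_param p t0)))"
      unfolding proots_prod using R_roots sub by (intro arg_cong[where f = sum_mset] image_mset_cong) blast
    also have "\<dots> = image_mset (\<lambda>j. g j t) J"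
      unfolding J_def g_def by (induction PF) (simp_all add: image_mset.compositionality o_def)
    finally show "proots (eval_param (prod_mset PF) t) = image_mset (\<lambda>j. g j t) J" .
  next
    fix j assume "j \<in># J"
    then show "C2_on (ball t0 e) (g j)"
      using J R_C2 sub unfolding g_def[abs_def] by (blast intro: C2_on_subset)
  next
    fix j j' assume j: "j \<in># J" "j' \<in># J" and eq: "g j t0 = g j' t0"
    then have "snd j = snd j'"
      using J R_C2 by (simp add: g_def)
    moreover have "poly2 (fst j) t0 (snd j) = 0" "poly2 (fst j') t0 (snd j') = 0"
      using J[OF j(1)] J[OF j(2)] nonzero by (auto simp: poly2_def)
    ultimately have "fst j = fst j'"
      using disjoint J[OF j(1)] J[OF j(2)] by metis
    with \<open>snd j = snd j'\<close> show "j = j'"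
      by (simp add: prod_eq_iff)
  qed
qed

lemma resultant_nonzero_imp_no_common_root:
  fixes f g :: "real poly"
  assumes "f \<noteq> 0" "resultant f g \<noteq> 0" "poly f x = 0"
  shows "poly g x \<noteq> 0"
proof
  assume "poly g x = 0"
  with assms(3) have "[:- x, 1:] dvd gcd f g"
    by (simp add: poly_eq_0_iff_dvd)
  then have "degree [:- x, 1:] \<le> degree (gcd f g)"
    using assms(1) by (intro dvd_imp_degree_le) auto
  with assms(2) show False
    using resultant_0_gcd[of f g] by simp
qed

lemma prime_factor_of_monic:
  fixes P p :: "real poly poly"
  assumes "lead_coeff P = 1" "p \<in># prime_factorization P"
  shows "poly (lead_coeff p) t \<noteq> 0" and "resultant p (pderiv p) \<noteq> 0"
proof -
  have "prime p"
    using assms(2) by (rule in_prime_factors_imp_prime)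
  obtain w where "P = p * w"
    using in_prime_factors_imp_dvd[OF assms(2)] by blast
  then have "1 = lead_coeff p * lead_coeff w"
    using assms(1) by (simp add: lead_coeff_mult)
  then have "is_unit (lead_coeff p)"
    by (rule dvdI)
  then have "degree (lead_coeff p) = 0" "lead_coeff p \<noteq> 0"
    by (auto simp: is_unit_iff_degree)
  then obtain c where c: "lead_coeff p = [:c:]" "c \<noteq> 0"
    by (metis degree_eq_zeroE pCons_0_0)
  then show "poly (lead_coeff p) t \<noteq> 0"
    by simp
  have "degree p \<noteq> 0"
  proof
    assume "degree p = 0"
    then have "p = [:[:c:]:]"
      using c by (metis degree_eq_zeroE lead_coeff_pCons(2))
    with c(2) have "is_unit p"
      by (simp add: is_unit_const_poly_iff)
    with \<open>prime p\<close> show False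
      by (simp add: prime_elem_not_unit)
  qed
  then have "pderiv p \<noteq> 0" "degree (pderiv p) < degree p"
    by (simp_all add: pderiv_eq_0_iff degree_pderiv)
  then have "\<not> p dvd pderiv p"
    using dvd_imp_degree_le leD by blast
  then have "coprime p (pderiv p)"
    by (rule prime_imp_coprime[OF \<open>prime p\<close>])
  then show "resultant p (pderiv p) \<noteq> 0"
    using resultant_0_gcd[of p "pderiv p"] by (simp add: coprime_iff_gcd_eq_1)
qed

lemma resultant_distinct_primes:
  fixes p p' :: "real poly poly"
  assumes "prime p" "prime p'" "p \<noteq> p'"
  shows "resultant p p' \<noteq> 0"
  using primes_coprime[OF assms] resultant_0_gcd[of p p'] by (simp add: coprime_iff_gcd_eq_1)

text \<open>Away from the roots of this polynomial in \<open>t\<close>, the prime factors of \<open>P(t, x)\<close> have simple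
  roots and no two of them share a root.\<close>

definition separating_poly :: "real poly poly \<Rightarrow> real poly" where
  "separating_poly P = (\<Prod>p\<in>set_mset (prime_factorization P).
      resultant p (pderiv p) * (\<Prod>p'\<in>set_mset (prime_factorization P) - {p}. resultant p p'))"

lemma separating_poly_nonzero:
  assumes "lead_coeff P = 1"
  shows "separating_poly P \<noteq> 0"
  using prime_factor_of_monic(2)[OF assms] resultant_distinct_primes in_prime_factors_imp_prime
  by (auto simp: separating_poly_def)

lemma separating_poly_simple_roots:
  assumes "lead_coeff P = 1" "poly (separating_poly P) t \<noteq> 0" "p \<in># prime_factorization P"
  shows "rsquarefree (eval_param p t)"
proof -
  note lc = prime_factor_of_monic(1)[OF assms(1,3)]
  have "poly (resultant p (pderiv p)) t \<noteq> 0"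
    using assms(2,3) by (auto simp: separating_poly_def poly_prod)
  then have "resultant (eval_param p t) (pderiv (eval_param p t)) \<noteq> 0"
    using resultant_eval_param[OF degree_eval_param[OF lc] degree_eval_param_pderiv[OF lc]]
    by (simp add: eval_param_pderiv)
  then show ?thesis
    unfolding rsquarefree_roots
    using resultant_nonzero_imp_no_common_root[OF eval_param_nonzero[OF lc]] by blast
qed

lemma separating_poly_disjoint_roots:
  assumes "lead_coeff P = 1" "poly (separating_poly P) t \<noteq> 0"
    and "p \<in># prime_factorization P" "p' \<in># prime_factorization P" "p \<noteq> p'" "poly2 p t x = 0"
  shows "poly2 p' t x \<noteq> 0"
proof -
  note lc = prime_factor_of_monic(1)[OF assms(1)]
  have "poly (resultant p p') t \<noteq> 0"
    using assms(2-5) by (auto simp: separating_poly_def poly_prod)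
  then have "resultant (eval_param p t) (eval_param p' t) \<noteq> 0"
    using resultant_eval_param[OF degree_eval_param[OF lc] degree_eval_param[OF lc]] assms(3,4)
    by simp
  then show ?thesis
    using resultant_nonzero_imp_no_common_root[OF eval_param_nonzero[OF lc[OF assms(3)]]] assms(6)
    by (simp add: poly2_def)
qed

lemma prod_mset_prime_factorization_monic:
  fixes P :: "real poly poly"
  assumes "lead_coeff P = 1"
  shows "prod_mset (prime_factorization P) = P"
proof -
  have "unit_factor P = 1"
    using assms by (simp add: unit_factor_poly_def)
  then have "normalize P = P"
    using normalize_mult_unit_factor[of P] by simp
  moreover have "P \<noteq> 0"
    using assms by auto
  ultimately show ?thesis
    by (simp add: prod_mset_prime_factorization)
qed

lemma proots_eval_param_separated_near:
  fixes P :: "real poly poly"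
  assumes "lead_coeff P = 1" "poly (separating_poly P) t0 \<noteq> 0"
    and split: "size (proots (eval_param P t0)) = degree P"
  obtains e and J :: "(real poly poly \<times> real) multiset" and g where "e > 0"
    "\<And>t. t \<in> ball t0 e \<Longrightarrow> proots (eval_param P t) = image_mset (\<lambda>j. g j t) J"
    "\<And>j. j \<in># J \<Longrightarrow> C2_on (ball t0 e) (g j)"
    "\<And>j j'. j \<in># J \<Longrightarrow> j' \<in># J \<Longrightarrow> g j t0 = g j' t0 \<Longrightarrow> j = j'"
proof -
  define PF where "PF = prime_factorization P"
  have PF_prod: "prod_mset PF = P"
    unfolding PF_def by (rule prod_mset_prime_factorization_monic[OF assms(1)])
  show ?thesis
  proof (rule proots_prod_eval_param_near[of PF t0])
    fix e and J :: "(real poly poly \<times> real) multiset" and g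
    assume "e > 0" "\<And>t. t \<in> ball t0 e \<Longrightarrow> proots (eval_param (prod_mset PF) t) = image_mset (\<lambda>j. g j t) J"
      "\<And>j. j \<in># J \<Longrightarrow> C2_on (ball t0 e) (g j)"
      "\<And>j j'. j \<in># J \<Longrightarrow> j' \<in># J \<Longrightarrow> g j t0 = g j' t0 \<Longrightarrow> j = j'"
    then show thesis
      unfolding PF_prod by (rule that)
  next
    show "size (proots (eval_param (prod_mset PF) t0)) = degree (eval_param (prod_mset PF) t0)"
      using split degree_eval_param[of P t0] assms(1) by (simp add: PF_prod)
  qed (use prime_factor_of_monic(1)[OF assms(1)] separating_poly_simple_roots[OF assms(1,2)]
      separating_poly_disjoint_roots[OF assms(1,2)] in \<open>auto simp: PF_def\<close>)
qed

lemma C2_near_nth_sorted_sqrt: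
  fixes g :: "'a \<Rightarrow> real \<Rightarrow> real"
  assumes "e > 0"
    and C2: "\<And>j. j \<in># J \<Longrightarrow> C2_on (ball t0 e) (g j)"
    and pos: "\<And>j t. j \<in># J \<Longrightarrow> t \<in> ball t0 e \<Longrightarrow> g j t > 0"
    and inj: "\<And>j j'. j \<in># J \<Longrightarrow> j' \<in># J \<Longrightarrow> g j t0 = g j' t0 \<Longrightarrow> j = j'"
    and "k < size J"
  obtains \<epsilon> where "0 < \<epsilon>" "\<epsilon> \<le> e"
    "C2_on (ball t0 \<epsilon>) (\<lambda>t. rev (sorted_list_of_multiset (image_mset (\<lambda>j. sqrt (g j t)) J)) ! k)"
proof -
  have "\<exists>j\<in>#J. \<forall>\<^sub>F t in nhds t0.
      sorted_list_of_multiset (image_mset (\<lambda>j. sqrt (g j t)) J) ! (size J - Suc k) = sqrt (g j t)"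
  proof (rule sorted_list_of_multiset_nth_near)
    show "j = j'" if "j \<in># J" "j' \<in># J" "sqrt (g j t0) = sqrt (g j' t0)" for j j'
      using inj that pos[of _ t0] \<open>e > 0\<close> by simp
    show "isCont (\<lambda>t. sqrt (g j t)) t0" if "j \<in># J" for j
      using C2_on_imp_isCont[OF C2[OF that]] \<open>e > 0\<close> by (intro continuous_intros) simp
  qed (use \<open>k < size J\<close> in simp)
  then obtain j e' where "j \<in># J" "e' > 0"
    and sorted: "\<And>t. dist t t0 < e' \<Longrightarrow>
      sorted_list_of_multiset (image_mset (\<lambda>j. sqrt (g j t)) J) ! (size J - Suc k) = sqrt (g j t)"
    unfolding eventually_nhds_metric by blast
  define \<epsilon> where "\<epsilon> = min e e'"
  have "C2_on (ball t0 \<epsilon>) (\<lambda>t. sqrt (g j t))"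
  proof (rule C2_on_sqrt)
    show "C2_on (ball t0 \<epsilon>) (g j)"
      by (intro C2_on_subset[OF C2[OF \<open>j \<in># J\<close>]] subset_ball) (simp add: \<epsilon>_def)
    show "g j t > 0" if "t \<in> ball t0 \<epsilon>" for t
      using pos[OF \<open>j \<in># J\<close>] that by (simp add: \<epsilon>_def)
  qed
  moreover have "length (sorted_list_of_multiset M) = size M" for M :: "real multiset"
    by (metis size_mset mset_sorted_list_of_multiset)
  then have "rev (sorted_list_of_multiset (image_mset (\<lambda>j. sqrt (g j t)) J)) ! k = sqrt (g j t)"
    if "t \<in> ball t0 \<epsilon>" for t
    using that sorted[of t] \<open>k < size J\<close> by (simp add: \<epsilon>_def dist_commute rev_nth)
  ultimately show ?thesis
    using \<open>e > 0\<close> \<open>e' > 0\<close> by (intro that[of \<epsilon>]) (auto simp: \<epsilon>_def intro: C2_on_cong)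
qed

lemma C2_on_nth_sorted_sqrt_roots:
  fixes P :: "real poly poly"
  assumes "lead_coeff P = 1" "open U"
    and separated: "\<And>t. t \<in> U \<Longrightarrow> poly (separating_poly P) t \<noteq> 0"
    and split: "\<And>t. t \<in> U \<Longrightarrow> size (proots (eval_param P t)) = degree P"
    and pos: "\<And>t x. t \<in> U \<Longrightarrow> x \<in># proots (eval_param P t) \<Longrightarrow> x > 0"
    and "k < degree P"
  shows "C2_on U (\<lambda>t. rev (sorted_list_of_multiset (image_mset sqrt (proots (eval_param P t)))) ! k)"
proof (rule C2_on_local[OF \<open>open U\<close>])
  fix t0 assume "t0 \<in> U"
  obtain e0 and J :: "(real poly poly \<times> real) multiset" and g where "e0 > 0"
    and roots: "\<And>t. t \<in> ball t0 e0 \<Longrightarrow> proots (eval_param P t) = image_mset (\<lambda>j. g j t) J"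
    and C2: "\<And>j. j \<in># J \<Longrightarrow> C2_on (ball t0 e0) (g j)"
    and inj: "\<And>j j'. j \<in># J \<Longrightarrow> j' \<in># J \<Longrightarrow> g j t0 = g j' t0 \<Longrightarrow> j = j'"
    by (rule proots_eval_param_separated_near[OF assms(1) separated split, OF \<open>t0 \<in> U\<close> \<open>t0 \<in> U\<close>])
      (rule that)
  obtain e where "e > 0" "e \<le> e0" "ball t0 e \<subseteq> U"
    using \<open>open U\<close> \<open>t0 \<in> U\<close> \<open>e0 > 0\<close>
    by (metis openE subset_ball min.cobounded1 min.cobounded2 min_less_iff_conj order_trans)
  then have roots_e: "proots (eval_param P t) = image_mset (\<lambda>j. g j t) J" if "t \<in> ball t0 e" for t
    using roots that by auto
  have "size J = degree P"
    using split[OF \<open>t0 \<in> U\<close>] roots_e[of t0] \<open>e > 0\<close> by simp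
  obtain \<epsilon> where "0 < \<epsilon>" "\<epsilon> \<le> e"
    and C2_sorted: "C2_on (ball t0 \<epsilon>)
      (\<lambda>t. rev (sorted_list_of_multiset (image_mset (\<lambda>j. sqrt (g j t)) J)) ! k)"
  proof (rule C2_near_nth_sorted_sqrt[OF \<open>e > 0\<close> _ _ inj])
    show "C2_on (ball t0 e) (g j)" if "j \<in># J" for j
      using C2_on_subset[OF C2[OF that]] subset_ball[OF \<open>e \<le> e0\<close>] .
    show "g j t > 0" if "j \<in># J" "t \<in> ball t0 e" for j t
      using pos[of t] roots_e[of t] that \<open>ball t0 e \<subseteq> U\<close> by auto
  qed (use \<open>size J = degree P\<close> \<open>k < degree P\<close> in auto)
  have "image_mset sqrt (proots (eval_param P t)) = image_mset (\<lambda>j. sqrt (g j t)) J" if "t \<in> ball t0 \<epsilon>" for t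
    using roots_e[of t] that \<open>\<epsilon> \<le> e\<close> by (simp add: image_mset.compositionality o_def)
  then have "C2_on (ball t0 \<epsilon>)
      (\<lambda>t. rev (sorted_list_of_multiset (image_mset sqrt (proots (eval_param P t)))) ! k)"
    by (intro C2_on_cong[OF open_ball _ C2_sorted]) simp
  with \<open>0 < \<epsilon>\<close> show "\<exists>\<epsilon>>0. C2_on (ball t0 \<epsilon>)
      (\<lambda>t. rev (sorted_list_of_multiset (image_mset sqrt (proots (eval_param P t)))) ! k)"
    by blast
qed

section \<open>Characteristic polynomials of Gram matrices\<close>

lemma det_map_matrix:
  assumes "comm_ring_hom h"
  shows "h (det A) = det (map_matrix h A)"
proof -
  interpret comm_ring_hom h
    by fact
  show ?thesis
    unfolding Determinants.det_def by (simp add: hom_sum hom_mult hom_prod hom_of_int)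
qed

definition charmat :: "'a::comm_ring_1^'n^'n \<Rightarrow> 'a poly^'n^'n" where
  "charmat A = (\<chi> i j. (if i = j then [:0, 1:] else 0) - [:A $ i $ j:])"

lemma charpoly_eq_det_charmat: "charpoly A = det (charmat A)"
  by (simp add: charpoly_def charmat_def)

lemma map_poly_det_charmat:
  assumes "comm_ring_hom h"
  shows "map_poly h (det (charmat A)) = det (charmat (map_matrix h A))"
proof -
  interpret base: comm_ring_hom h
    by fact
  interpret map_poly_comm_ring_hom h ..
  have const: "map_poly h [:a:] = [:h a:]" for a
    by (cases "a = 0") (simp_all add: Polynomial.map_poly_pCons)
  show ?thesis
    unfolding det_map_matrix[OF comm_ring_hom_axioms]
    by (rule arg_cong[where f = det])
      (simp add: charmat_def map_matrix_def Finite_Cartesian_Product.vec_eq_iff hom_minus const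
        if_distrib[of "map_poly h"] cong: if_cong)
qed

lemma degree_prod_charmat_perm:
  fixes A :: "'a::idom^'n^'n"
  assumes "p \<noteq> id"
  shows "degree (\<Prod>i\<in>UNIV. charmat A $ i $ p i) < CARD('n)"
proof -
  obtain i0 where "p i0 \<noteq> i0"
    using assms by (metis eq_id_iff)
  have "degree (\<Prod>i\<in>UNIV. charmat A $ i $ p i) \<le> (\<Sum>i\<in>UNIV. degree (charmat A $ i $ p i))"
    using degree_prod_sum_le[of UNIV "\<lambda>i. charmat A $ i $ p i"] by (simp add: o_def)
  also have "\<dots> \<le> (\<Sum>i\<in>UNIV. if p i = i then 1 else 0)"
    by (intro sum_mono) (simp add: charmat_def)
  also have "\<dots> = card {i. p i = i}"
    by (simp add: sum.If_cases)
  also have "\<dots> < CARD('n)"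
    using \<open>p i0 \<noteq> i0\<close> by (intro psubset_card_mono) auto
  finally show ?thesis .
qed

lemma charmat_monic:
  fixes A :: "'a::idom^'n^'n"
  shows "degree (det (charmat A)) = CARD('n)" and "lead_coeff (det (charmat A)) = 1"
proof -
  define T where "T p = of_int (sign p) * (\<Prod>i\<in>UNIV. charmat A $ i $ p i)" for p
  define P where "P = {p. p permutes (UNIV :: 'n set)} - {id}"
  have "finite P"
    by (simp add: P_def finite_permutations)
  have det: "det (charmat A) = T id + sum T P"
    unfolding Determinants.det_def T_def[symmetric] P_def
    by (rule sum.remove) (simp_all add: finite_permutations)
  have T_id: "T id = (\<Prod>i\<in>UNIV. [:- A $ i $ i, 1:])"
    by (simp add: T_def charmat_def)
  have deg_T_id: "degree (T id) = CARD('n)"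
    unfolding T_id by (subst degree_prod_eq_sum_degree) auto
  have less_n: "degree (T p) < CARD('n)" if "p \<in> P" for p
    using degree_mult_le[of "of_int (sign p)" "\<Prod>i\<in>UNIV. charmat A $ i $ p i"]
      degree_prod_charmat_perm[of p A] that
    by (simp add: T_def P_def)
  then have "degree (T p) \<le> CARD('n) - 1" if "p \<in> P" for p
    using less_n[OF that] by linarith
  then have "degree (sum T P) \<le> CARD('n) - 1"
    using \<open>finite P\<close> by (intro degree_sum_le) auto
  moreover have "0 < CARD('n)"
    by (rule finite_UNIV_card_ge_0) simp
  ultimately have less: "degree (sum T P) < degree (T id)"
    using deg_T_id by linarith
  then show deg: "degree (det (charmat A)) = CARD('n)"
    unfolding det using deg_T_id degree_add_eq_left[OF less] by simp
  have "coeff (sum T P) (CARD('n)) = 0"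
    using less deg_T_id by (intro coeff_eq_0) simp
  then have "lead_coeff (det (charmat A)) = lead_coeff (T id)"
    unfolding deg by (simp add: det deg_T_id)
  also have "\<dots> = 1"
    unfolding T_id lead_coeff_prod by simp
  finally show "lead_coeff (det (charmat A)) = 1" .
qed

lemma det_eq_0_iff_kernel:
  fixes B :: "'a::field^'n^'n"
  shows "det B = 0 \<longleftrightarrow> (\<exists>v. v \<noteq> 0 \<and> B *v v = 0)"
proof -
  have "det B \<noteq> 0 \<longleftrightarrow> inj ((*v) B)"
    using det_nz_iff_inj_gen[OF matrix_vector_mul_linear_gen[of B]] by simp
  also have "\<dots> \<longleftrightarrow> (\<forall>v. B *v v = 0 \<longrightarrow> v = 0)"
    unfolding inj_def
    by (metis (no_types, opaque_lifting) eq_iff_diff_eq_0 matrix_vector_mult_0_right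
        matrix_vector_mult_diff_distrib)
  finally show ?thesis
    by blast
qed

lemma charpoly_root_eigenvector:
  fixes M :: "real^'n^'n"
  assumes "poly (map_poly of_real (charpoly M)) z = 0"
  shows "\<exists>v. v \<noteq> 0 \<and> map_matrix complex_of_real M *v v = z *s v"
proof -
  define B where "B = map_matrix (\<lambda>p. poly p z) (charmat (map_matrix complex_of_real M))"
  have "det B = poly (map_poly of_real (charpoly M)) z"
    unfolding B_def charpoly_eq_det_charmat
    by (simp add: map_poly_det_charmat[OF of_real_hom.comm_ring_hom_axioms]
        det_map_matrix[OF poly_hom.comm_ring_hom_axioms, symmetric])
  then obtain v where "v \<noteq> 0" "B *v v = 0"
    using assms det_eq_0_iff_kernel by auto
  moreover have "B = (\<chi> i j. (if i = j then z else 0) - complex_of_real (M $ i $ j))"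
    by (simp add: B_def charmat_def Finite_Cartesian_Product.vec_eq_iff map_matrix_def
        if_distrib[of "\<lambda>p. poly p z"] cong: if_cong)
  then have "(B *v v) $ i = (z *s v - map_matrix complex_of_real M *v v) $ i" for i
    by (simp add: matrix_vector_mult_def left_diff_distrib sum_subtractf
        if_distrib[of "\<lambda>x. x * _"] cong: if_cong)
  then have "B *v v = z *s v - map_matrix complex_of_real M *v v"
    by (rule Finite_Cartesian_Product.vec_eq_iff[THEN iffD2, OF allI])
  ultimately show ?thesis
    by auto
qed

text \<open>For an eigenvector \<open>v\<close> of \<open>A\<^sup>T A\<close> with eigenvalue \<open>z\<close>, \<open>z |v|\<^sup>2 = |A v|\<^sup>2\<close>.\<close>

lemma gram_eigenvalue_pos:
  fixes A :: "real^'n^'n"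
  assumes "det A \<noteq> 0" "v \<noteq> 0"
    and eigen: "map_matrix complex_of_real (transpose A ** A) *v v = z *s v"
  shows "\<exists>x>0. z = of_real x"
proof -
  define w where "w = map_matrix complex_of_real A *v v"
  define norm2 where "norm2 u = (\<Sum>i\<in>UNIV. (cmod (u $ i))\<^sup>2)" for u :: "complex^'n"
  have w: "w $ k = (\<Sum>j\<in>UNIV. of_real (A $ k $ j) * v $ j)" for k
    by (simp add: w_def matrix_vector_mult_def)
  have "z * (\<Sum>i\<in>UNIV. cnj (v $ i) * v $ i) = (\<Sum>i\<in>UNIV. cnj (v $ i) * (z *s v) $ i)"
    by (simp add: sum_distrib_left ac_simps)
  also have "\<dots> = (\<Sum>i\<in>UNIV. \<Sum>j\<in>UNIV. \<Sum>k\<in>UNIV.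
      cnj (v $ i) * of_real (A $ k $ i) * (of_real (A $ k $ j) * v $ j))"
    unfolding eigen[symmetric]
    by (simp add: matrix_vector_mult_def matrix_matrix_mult_def transpose_def sum_distrib_left
        sum_distrib_right ac_simps)
  also have "\<dots> = (\<Sum>i\<in>UNIV. \<Sum>k\<in>UNIV. \<Sum>j\<in>UNIV.
      cnj (v $ i) * of_real (A $ k $ i) * (of_real (A $ k $ j) * v $ j))"
    by (rule sum.cong[OF refl], rule sum.swap)
  also have "\<dots> = (\<Sum>k\<in>UNIV. \<Sum>i\<in>UNIV. \<Sum>j\<in>UNIV.
      cnj (v $ i) * of_real (A $ k $ i) * (of_real (A $ k $ j) * v $ j))"
    by (rule sum.swap)
  also have "\<dots> = (\<Sum>k\<in>UNIV. (\<Sum>i\<in>UNIV. cnj (v $ i) * of_real (A $ k $ i))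
      * (\<Sum>j\<in>UNIV. of_real (A $ k $ j) * v $ j))"
    by (simp add: sum_product)
  also have "\<dots> = (\<Sum>k\<in>UNIV. cnj (w $ k) * w $ k)"
    by (simp add: w ac_simps)
  finally have key: "z * of_real (norm2 v) = of_real (norm2 w)"
    by (simp only: norm2_def complex_norm_square of_real_sum mult.commute[of "cnj _"])
  have norm2_pos: "norm2 u > 0" if "u \<noteq> 0" for u
  proof -
    obtain i where "u $ i \<noteq> 0"
      using \<open>u \<noteq> 0\<close> by (auto simp: Finite_Cartesian_Product.vec_eq_iff)
    then show ?thesis
      unfolding norm2_def by (intro sum_pos2[of _ i]) auto
  qed
  have "w \<noteq> 0"
  proof -
    have "complex_of_real (det A) = det (map_matrix complex_of_real A)"
      by (rule det_map_matrix[OF of_real_hom.comm_ring_hom_axioms])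
    then have "det (map_matrix complex_of_real A) \<noteq> 0"
      using assms(1) by (metis of_real_eq_0_iff)
    then show ?thesis
      using assms(2) det_eq_0_iff_kernel unfolding w_def by blast
  qed
  then have "z = of_real (norm2 w / norm2 v)" "norm2 w / norm2 v > 0"
    using key norm2_pos[OF assms(2)] norm2_pos[of w] by (auto simp: field_simps)
  then show ?thesis
    by blast
qed

lemma size_proots_eq_degree_if_real_roots:
  fixes p :: "real poly"
  assumes "\<And>z :: complex. poly (map_poly of_real p) z = 0 \<Longrightarrow> z \<in> \<real>"
  shows "size (proots p) = degree p"
  using assms
proof (induction "degree p" arbitrary: p)
  case 0
  then show ?case
    using size_proots_le[of p] by simp
next
  case (Suc m)
  have "\<not> constant (poly (map_poly complex_of_real p))"
    using Suc(2) by (simp add: constant_degree)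
  then obtain z where "poly (map_poly complex_of_real p) z = 0"
    using fundamental_theorem_of_algebra by blast
  moreover from this Suc(3) obtain x where "z = of_real x"
    by (auto elim: Reals_cases)
  ultimately have "poly p x = 0"
    by simp
  then obtain q where p: "p = [:- x, 1:] * q"
    using poly_eq_0_iff_dvd by blast
  with Suc(2) have "q \<noteq> 0"
    by auto
  then have "degree q = m"
    using Suc(2) unfolding p by (subst (asm) degree_mult_eq) auto
  moreover have "z \<in> \<real>" if "poly (map_poly of_real q) z = 0" for z :: complex
  proof -
    interpret map_poly_comm_ring_hom "of_real :: real \<Rightarrow> complex" ..
    have "poly (map_poly of_real p) z = poly (map_poly of_real [:- x, 1:]) z * poly (map_poly of_real q) z"
      unfolding p by (simp only: hom_mult poly_mult)
    then show ?thesis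
      using Suc(3)[of z] that by simp
  qed
  ultimately have "size (proots q) = degree q"
    using Suc(1) by blast
  moreover have "proots p = proots [:- x, 1:] + proots q"
    unfolding p by (rule proots_mult) (use \<open>q \<noteq> 0\<close> in auto)
  moreover have "proots [:- x, 1:] = {#x#}"
    using proots_linear_factor[of "- x"] by simp
  ultimately show ?case
    using Suc(2) \<open>degree q = m\<close> by simp
qed

lemma proots_charpoly_gram:
  fixes A :: "real^'n^'n"
  assumes "det A \<noteq> 0"
  shows "size (proots (charpoly (transpose A ** A))) = CARD('n)"
    and "x \<in># proots (charpoly (transpose A ** A)) \<Longrightarrow> x > 0"
proof -
  have positive: "\<exists>x>0. z = of_real x" if "poly (map_poly of_real (charpoly (transpose A ** A))) z = 0"
    for z :: complex
    using charpoly_root_eigenvector[OF that] gram_eigenvalue_pos[OF assms] by blast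
  then have "size (proots (charpoly (transpose A ** A))) = degree (charpoly (transpose A ** A))"
    by (intro size_proots_eq_degree_if_real_roots) (metis Reals_of_real)
  then show "size (proots (charpoly (transpose A ** A))) = CARD('n)"
    by (simp add: charpoly_eq_det_charmat charmat_monic)
  assume "x \<in># proots (charpoly (transpose A ** A))"
  moreover have "charpoly (transpose A ** A) \<noteq> 0"
    using charmat_monic(2)[of "transpose A ** A"] by (auto simp: charpoly_eq_det_charmat)
  ultimately have "poly (map_poly of_real (charpoly (transpose A ** A))) (complex_of_real x) = 0"
    by simp
  then obtain y where "y > 0" "complex_of_real x = of_real y"
    using positive by blast
  then show "x > 0"
    by simp
qed

section \<open>The pencil \<open>F + t H\<close>\<close>

definition pencil :: "real^'n^'n \<Rightarrow> real^'n^'n \<Rightarrow> real poly^'n^'n" where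
  "pencil F H = (\<chi> i j. [:F $ i $ j, H $ i $ j:])"

lemma map_matrix_poly_pencil: "map_matrix (\<lambda>c. poly c t) (pencil F H) = F + t *\<^sub>R H"
  by (simp add: pencil_def map_matrix_def Finite_Cartesian_Product.vec_eq_iff)

lemma map_matrix_gram:
  assumes "comm_ring_hom h"
  shows "map_matrix h (transpose A ** A) = transpose (map_matrix h A) ** map_matrix h A"
proof -
  interpret comm_ring_hom h
    by fact
  show ?thesis
    by (simp add: map_matrix_def matrix_matrix_mult_def transpose_def hom_sum hom_mult)
qed

lemma poly_det_pencil: "poly (det (pencil F H)) t = det (F + t *\<^sub>R H)"
  using det_map_matrix[OF poly_hom.comm_ring_hom_axioms, of "pencil F H" t]
  by (simp add: map_matrix_poly_pencil)

definition pencil_gram_charpoly :: "real^'n^'n \<Rightarrow> real^'n^'n \<Rightarrow> real poly poly" where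
  "pencil_gram_charpoly F H = det (charmat (transpose (pencil F H) ** pencil F H))"

lemma eval_param_pencil_gram_charpoly:
  "eval_param (pencil_gram_charpoly F H) t = charpoly (transpose (F + t *\<^sub>R H) ** (F + t *\<^sub>R H))"
  unfolding eval_param_def pencil_gram_charpoly_def charpoly_eq_det_charmat
  by (simp add: map_poly_det_charmat[OF poly_hom.comm_ring_hom_axioms]
      map_matrix_gram[OF poly_hom.comm_ring_hom_axioms] map_matrix_poly_pencil)

lemma pencil_gram_charpoly_monic:
  fixes F H :: "real^'n^'n"
  shows "degree (pencil_gram_charpoly F H) = CARD('n)" and "lead_coeff (pencil_gram_charpoly F H) = 1"
  unfolding pencil_gram_charpoly_def by (rule charmat_monic)+

lemma C2_on_sing_vals_pencil:
  fixes F H :: "real^'n^'n"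
  assumes "open U" and det: "\<And>t. t \<in> U \<Longrightarrow> det (F + t *\<^sub>R H) \<noteq> 0"
    and "\<And>t. t \<in> U \<Longrightarrow> poly (separating_poly (pencil_gram_charpoly F H)) t \<noteq> 0"
    and "k < CARD('n)"
  shows "C2_on U (\<lambda>t. sing_vals (F + t *\<^sub>R H) ! k)"
  unfolding sing_vals_def eval_param_pencil_gram_charpoly[symmetric]
proof (rule C2_on_nth_sorted_sqrt_roots[OF pencil_gram_charpoly_monic(2) assms(1,3)])
  fix t assume "t \<in> U"
  show "size (proots (eval_param (pencil_gram_charpoly F H) t)) = degree (pencil_gram_charpoly F H)"
    using proots_charpoly_gram(1)[OF det[OF \<open>t \<in> U\<close>]]
    by (simp add: eval_param_pencil_gram_charpoly pencil_gram_charpoly_monic)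
  show "x > 0" if "x \<in># proots (eval_param (pencil_gram_charpoly F H) t)" for x
    using proots_charpoly_gram(2)[OF det[OF \<open>t \<in> U\<close>]] that by (simp add: eval_param_pencil_gram_charpoly)
qed (use assms(4) in \<open>simp_all add: pencil_gram_charpoly_monic\<close>)

theorem lemma4p1:
  fixes F H :: "real^'n^'n"
  assumes "det F > 0"
    and "rank H = 1"
    and "det (F + H) > 0"
  shows "\<exists>T. finite T \<and> T \<subseteq> {0<..<1} \<and>
           (\<forall>k < CARD('n). C2_on ({0<..<1} - T) (\<lambda>t. sing_vals (F + t *\<^sub>R H) ! k))"
proof -
  define D where "D = det (pencil F H) * separating_poly (pencil_gram_charpoly F H)"
  have "D \<noteq> 0"
    using poly_det_pencil[of F H 0] assms(1) separating_poly_nonzero[OF pencil_gram_charpoly_monic(2)]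
    by (auto simp: D_def)
  define T where "T = {0<..<1} \<inter> {t. poly D t = 0}"
  have "finite T"
    using poly_roots_finite[OF \<open>D \<noteq> 0\<close>] by (simp add: T_def)
  moreover have "C2_on ({0<..<1} - T) (\<lambda>t. sing_vals (F + t *\<^sub>R H) ! k)" if "k < CARD('n)" for k
  proof (rule C2_on_sing_vals_pencil[OF _ _ _ that])
    show "open ({0<..<1} - T)"
      using \<open>finite T\<close> by (intro open_Diff finite_imp_closed) auto
  qed (auto simp: T_def D_def poly_det_pencil)
  ultimately show ?thesis
    by (auto simp: T_def)
qed

end
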